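(* Let $G$ be a claw-free graph and $C$ an even hole of length $2k$, labelled $C=\mathbf{b}_0-\mathbf{a}_0-\mathbf{b}_1-\mathbf{a}_1-\dots-\mathbf{b}_{k-1}-\mathbf{a}_{k-1}-\mathbf{b}_0$ (indices mod $k$). Let $\mathbf{s}\notin C$ with $\Gamma_C(\mathbf{s})=\{\mathbf{b}_0,\mathbf{a}_0,\mathbf{b}_1\}$, and let $\mathbf{t}\notin C\cup\{\mathbf{s}\}$ be adjacent to exactly one element of $\{\mathbf{s},\mathbf{a}_0\}$. Then, with $\mathbf{u}\in\{\mathbf{s},\mathbf{a}_0\}$ denoting that element, $\Gamma_{\{\mathbf{s}\}\cup C}(\mathbf{t})$ is one of (i) $\{\mathbf{a}_{k-1},\mathbf{b}_0,\mathbf{u}\}$; (ii) $\{\mathbf{b}_{k-1},\mathbf{a}_{k-1},\mathbf{b}_0,\mathbf{u}\}$; (iii) $\{\mathbf{u},\mathbf{b}_1,\mathbf{a}_1\}$; (iv) $\{\mathbf{u},\mathbf{b}_1,\mathbf{a}_1,\mathbf{b}_2\}$. If $k=2$, cases (ii) and (iv) coincide.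
   Context: A hole is an induced cycle of length at least 4; an even hole has even length. Claw-free: no induced $K_{1,3}$. $\Gamma_U(\mathbf{t})$ denotes the set of neighbours of $\mathbf{t}$ in $U$. (The condition on $\mathbf{s}$ says $(C\setminus\{\mathbf{a}_0\})\cup\{\mathbf{s}\}$ is a single-vertex deformation of $C$, with $\mathbf{a}_0$ the clone of $\mathbf{s}$.) *)

theory Defs
  imports Main
begin

definition graph :: "'v set \<Rightarrow> ('v \<Rightarrow> 'v \<Rightarrow> bool) \<Rightarrow> bool" where
  "graph V E \<longleftrightarrow> (\<forall>x y. E x y \<longrightarrow> x \<in> V \<and> y \<in> V \<and> E y x \<and> x \<noteq> y)"

definition claw_free :: "'v set \<Rightarrow> ('v \<Rightarrow> 'v \<Rightarrow> bool) \<Rightarrow> bool" where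
  "claw_free V E \<longleftrightarrow> \<not> (\<exists>x\<in>V. \<exists>y\<in>V. \<exists>z\<in>V. \<exists>w\<in>V.
      E x y \<and> E x z \<and> E x w \<and> y \<noteq> z \<and> y \<noteq> w \<and> z \<noteq> w \<and>
      \<not> E y z \<and> \<not> E y w \<and> \<not> E z w)"

definition hole :: "'v set \<Rightarrow> ('v \<Rightarrow> 'v \<Rightarrow> bool) \<Rightarrow> (nat \<Rightarrow> 'v) \<Rightarrow> nat \<Rightarrow> bool" where
  "hole V E c n \<longleftrightarrow> n \<ge> 4 \<and> (\<forall>i<n. c i \<in> V) \<and> inj_on c {..<n} \<and>
     (\<forall>i<n. \<forall>j<n. E (c i) (c j) \<longleftrightarrow> (j = Suc i mod n \<or> i = Suc j mod n))"

definition interleave :: "(nat \<Rightarrow> 'v) \<Rightarrow> (nat \<Rightarrow> 'v) \<Rightarrow> nat \<Rightarrow> 'v" where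
  "interleave b a i = (if even i then b (i div 2) else a (i div 2))"

definition nbrs :: "('v \<Rightarrow> 'v \<Rightarrow> bool) \<Rightarrow> 'v set \<Rightarrow> 'v \<Rightarrow> 'v set" where
  "nbrs E U t = {x \<in> U. E t x}"

end

theory Submission
  imports Defs "HOL-Number_Theory.Cong"
begin

text \<open>Deleting \<open>a\<^sub>0\<close> from the hole leaves an induced path \<open>P\<close> from \<open>b\<^sub>1\<close> to \<open>b\<^sub>0\<close>,
  and both \<open>s\<close> and \<open>a\<^sub>0\<close> see exactly the two ends of \<open>P\<close>; \<open>t\<close> sees one of them, \<open>u\<close>,
  but not the other, \<open>w\<close>. A claw at \<open>u\<close> would arise unless \<open>t\<close> sees an end of \<open>P\<close>;
  a claw at that end (with \<open>w\<close>) unless \<open>t\<close> also sees the next vertex of \<open>P\<close>; and a claw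
  at \<open>t\<close> (with \<open>u\<close> and that next vertex) if \<open>t\<close> saw a vertex of \<open>P\<close> non-adjacent to
  it other than the far end. So \<open>t\<close> sees two or three consecutive vertices at one end of
  \<open>P\<close>, unless it sees both ends, which forces \<open>P\<close> to have three vertices: with four,
  \<open>C\<close> would be an odd hole.\<close>

definition induced_path :: "'v set \<Rightarrow> ('v \<Rightarrow> 'v \<Rightarrow> bool) \<Rightarrow> (nat \<Rightarrow> 'v) \<Rightarrow> nat \<Rightarrow> bool" where
  "induced_path V E p m \<longleftrightarrow> (\<forall>i\<le>m. p i \<in> V) \<and> inj_on p {..m} \<and>
     (\<forall>i\<le>m. \<forall>j\<le>m. E (p i) (p j) \<longleftrightarrow> (j = Suc i \<or> i = Suc j))"

lemma add_mod_right_cancel: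
  fixes a b r n :: nat
  shows "(a + r) mod n = (b + r) mod n \<longleftrightarrow> a mod n = b mod n"
  using cong_add_rcancel_nat[of a r b n] by (simp add: cong_def)

lemma image_add_mod:
  fixes r n :: nat
  assumes "0 < n"
  shows "(\<lambda>j. (j + r) mod n) ` {..<n} = {..<n}"
proof -
  have "inj_on (\<lambda>j. (j + r) mod n) {..<n}"
    by (auto simp: inj_on_def add_mod_right_cancel)
  moreover have "(\<lambda>j. (j + r) mod n) ` {..<n} \<subseteq> {..<n}"
    using assms by auto
  ultimately show ?thesis
    by (simp add: endo_inj_surj)
qed

lemma hole_length: "hole V E c n \<Longrightarrow> 4 \<le> n"
  unfolding hole_def by blast

lemma hole_in_vertices: "hole V E c n \<Longrightarrow> i < n \<Longrightarrow> c i \<in> V"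
  unfolding hole_def by blast

lemma hole_inj: "hole V E c n \<Longrightarrow> inj_on c {..<n}"
  unfolding hole_def by blast

lemma hole_adj:
  "hole V E c n \<Longrightarrow> i < n \<Longrightarrow> j < n \<Longrightarrow> E (c i) (c j) \<longleftrightarrow> (j = Suc i mod n \<or> i = Suc j mod n)"
  unfolding hole_def by blast

lemma hole_rotate:
  assumes "hole V E c n"
  shows "hole V E (\<lambda>j. c ((j + r) mod n)) n"
proof -
  have n: "0 < n" using hole_length[OF assms] by simp
  have "inj_on (\<lambda>j. (j + r) mod n) {..<n}"
    by (auto simp: inj_on_def add_mod_right_cancel)
  moreover have "inj_on c ((\<lambda>j. (j + r) mod n) ` {..<n})"
    using hole_inj[OF assms] n by (simp add: image_add_mod)
  ultimately have inj: "inj_on (\<lambda>j. c ((j + r) mod n)) {..<n}"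
    using comp_inj_on by (auto simp: o_def)
  have shift: "(j + r) mod n = Suc ((i + r) mod n) mod n \<longleftrightarrow> j = Suc i mod n"
    if "j < n" for i j
  proof -
    have "Suc ((i + r) mod n) mod n = (Suc i + r) mod n"
      by (simp add: mod_simps)
    then show ?thesis
      using that add_mod_right_cancel[where a = j and b = "Suc i"] by simp
  qed
  show ?thesis
    unfolding hole_def
    using hole_length[OF assms] hole_in_vertices[OF assms] hole_adj[OF assms] n inj shift
    by simp
qed

lemma induced_path_hole:
  assumes "hole V E c n"
  shows "induced_path V E c (n - 2)"
proof -
  have "n - 2 < n" using hole_length[OF assms] by simp
  moreover have "E (c i) (c j) \<longleftrightarrow> (j = Suc i \<or> i = Suc j)" if "i \<le> n - 2" "j \<le> n - 2" for i j
    using that hole_adj[OF assms, of i j] hole_length[OF assms] by simp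
  moreover have "inj_on c {..n - 2}"
    by (rule inj_on_subset[OF hole_inj[OF assms]]) (use \<open>n - 2 < n\<close> in auto)
  ultimately show ?thesis
    unfolding induced_path_def using hole_in_vertices[OF assms] by auto
qed

lemma nbrs_hole_last:
  assumes "hole V E c n"
  shows "nbrs E (c ` {..n - 2}) (c (n - 1)) = {c 0, c (n - 2)}"
proof -
  have n: "4 \<le> n" using hole_length[OF assms] .
  have "E (c (n - 1)) (c j) \<longleftrightarrow> j = 0 \<or> j = n - 2" if "j \<le> n - 2" for j
    using hole_adj[OF assms, of "n - 1" j] that n by auto
  then show ?thesis
    using n by (auto simp: nbrs_def)
qed

lemma induced_path_hole_delete:
  assumes "hole V E c n" "i < n"
  shows "induced_path V E (\<lambda>j. c ((j + Suc i) mod n)) (n - 2)"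
    and "(\<lambda>j. c ((j + Suc i) mod n)) ` {..n - 2} = c ` {..<n} - {c i}"
    and "nbrs E ((\<lambda>j. c ((j + Suc i) mod n)) ` {..n - 2}) (c i) =
      {c (Suc i mod n), c ((n - 2 + Suc i) mod n)}"
proof -
  let ?c = "\<lambda>j. c ((j + Suc i) mod n)"
  have rot: "hole V E ?c n"
    by (rule hole_rotate[OF assms(1)])
  then show "induced_path V E ?c (n - 2)"
    by (rule induced_path_hole)
  have n: "4 \<le> n" using hole_length[OF assms(1)] .
  have "?c ` {..<n} = c ` ((\<lambda>j. (j + Suc i) mod n) ` {..<n})"
    by (simp only: image_image)
  also have "\<dots> = c ` {..<n}"
    using n by (simp only: image_add_mod)
  finally have image: "?c ` {..<n} = c ` {..<n}" .
  have "{..<n} = insert (n - 1) {..n - 2}" using n by auto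
  then have "?c ` {..n - 2} = ?c ` {..<n} - {?c (n - 1)}"
    using hole_inj[OF rot] n by (auto simp: inj_on_def)
  moreover have "?c (n - 1) = c i"
    using assms(2) n by simp
  ultimately show "?c ` {..n - 2} = c ` {..<n} - {c i}"
    by (simp only: image)
  show "nbrs E (?c ` {..n - 2}) (c i) = {c (Suc i mod n), c ((n - 2 + Suc i) mod n)}"
    using nbrs_hole_last[OF rot] \<open>?c (n - 1) = c i\<close> by simp
qed

lemma induced_path_reverse:
  assumes "induced_path V E p m"
  shows "induced_path V E (\<lambda>j. p (m - j)) m"
proof -
  have "inj_on p {..m}" using assms by (simp add: induced_path_def)
  then have "inj_on (\<lambda>j. p (m - j)) {..m}"
    unfolding inj_on_def by (metis atMost_iff diff_diff_cancel diff_le_self)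
  moreover have "m - j = Suc (m - i) \<longleftrightarrow> i = Suc j" if "i \<le> m" "j \<le> m" for i j
    using that by arith
  ultimately show ?thesis
    using assms unfolding induced_path_def by auto
qed

lemma claw_freeD:
  assumes "claw_free V E" "x \<in> V" "y \<in> V" "z \<in> V" "w \<in> V" "E x y" "E x z" "E x w"
    and "y \<noteq> z" "y \<noteq> w" "z \<noteq> w"
  shows "E y z \<or> E y w \<or> E z w"
  using assms unfolding claw_free_def by blast

locale closing_pair =
  fixes V :: "'v set" and E :: "'v \<Rightarrow> 'v \<Rightarrow> bool" and p :: "nat \<Rightarrow> 'v" and m :: nat
    and u w t :: 'v
  assumes graph: "graph V E" and claw_free: "claw_free V E"
    and path: "induced_path V E p m" and path_length: "2 \<le> m"
    and in_vertices: "u \<in> V" "w \<in> V" "t \<in> V"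
    and off_path: "u \<notin> p ` {..m}" "w \<notin> p ` {..m}" "t \<notin> p ` {..m}"
    and nbrs_u: "nbrs E (p ` {..m}) u = {p 0, p m}"
    and nbrs_w: "nbrs E (p ` {..m}) w = {p 0, p m}"
    and t_ne_w: "t \<noteq> w" and adj_t_u: "E t u" and not_adj_t_w: "\<not> E t w"
begin

lemma path_ne_off_path: "i \<le> m \<Longrightarrow> p i \<noteq> u \<and> p i \<noteq> w \<and> p i \<noteq> t"
  using off_path by auto

lemma adj_sym: "E x y \<longleftrightarrow> E y x"
  using graph unfolding graph_def by blast

lemma path_in_vertices: "i \<le> m \<Longrightarrow> p i \<in> V"
  using path unfolding induced_path_def by blast

lemma path_eq_iff: "i \<le> m \<Longrightarrow> j \<le> m \<Longrightarrow> p i = p j \<longleftrightarrow> i = j"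
  using path unfolding induced_path_def inj_on_def by blast

lemma path_adj: "i \<le> m \<Longrightarrow> j \<le> m \<Longrightarrow> E (p i) (p j) \<longleftrightarrow> (j = Suc i \<or> i = Suc j)"
  using path unfolding induced_path_def by blast

lemma adj_path_iff_end:
  assumes "x \<in> {u, w}" "i \<le> m"
  shows "E x (p i) \<longleftrightarrow> i = 0 \<or> i = m"
proof -
  have "E x (p i) \<longleftrightarrow> p i \<in> {p 0, p m}"
    using assms nbrs_u nbrs_w unfolding nbrs_def by blast
  then show ?thesis
    using assms(2) path_eq_iff by auto
qed

lemma adj_t_end: "E t (p 0) \<or> E t (p m)"
proof (rule ccontr)
  assume "\<not> ?thesis"
  moreover have "E u (p 0)" "E u (p m)" "\<not> E (p 0) (p m)"
    using adj_path_iff_end[of u] path_adj[of 0 m] path_length by auto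
  ultimately show False
    using claw_freeD[OF claw_free, of u "p 0" "p m" t] in_vertices path_in_vertices
      path_eq_iff[of 0 m] path_length path_ne_off_path adj_t_u adj_sym by auto
qed

lemma adj_t_second:
  assumes "E t (p 0)"
  shows "E t (p 1)"
proof (rule ccontr)
  assume "\<not> ?thesis"
  moreover have "E (p 0) (p 1)" "E (p 0) w" "\<not> E (p 1) w"
    using path_adj[of 0 1] adj_path_iff_end[of w] path_length adj_sym by auto
  ultimately show False
    using claw_freeD[OF claw_free, of "p 0" "p 1" w t] assms in_vertices path_in_vertices
      path_length path_ne_off_path t_ne_w not_adj_t_w adj_sym by auto
qed

lemma nbrs_t_subset:
  assumes "E t (p 1)"
  shows "nbrs E (p ` {..m}) t \<subseteq> {p 0, p 1, p 2, p m}"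
proof
  fix x assume x: "x \<in> nbrs E (p ` {..m}) t"
  then obtain j where j: "j \<le> m" "x = p j" "E t (p j)"
    unfolding nbrs_def by blast
  show "x \<in> {p 0, p 1, p 2, p m}"
  proof (rule ccontr)
    assume "x \<notin> {p 0, p 1, p 2, p m}"
    then have "j \<notin> {0, 1, 2, m}" using j(1,2) path_eq_iff[OF j(1)] path_length by auto
    moreover have "\<not> E u (p 1)" "\<not> E u (p j)" "\<not> E (p 1) (p j)"
      using calculation j adj_path_iff_end[of u] path_adj[of 1 j] path_length by auto
    ultimately show False
      using claw_freeD[OF claw_free, of t u "p 1" "p j"] assms j in_vertices path_in_vertices
        path_eq_iff[of 1 j] path_ne_off_path[of 1] path_ne_off_path[OF j(1)] path_length
        adj_t_u adj_sym by auto
  qed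
qed

lemma nbrs_t_start:
  assumes "E t (p 0)" "\<not> E t (p m)"
  shows "nbrs E (p ` {..m}) t \<in> {{p 0, p 1}, {p 0, p 1, p 2}}"
proof -
  have "E t (p 1)" using adj_t_second[OF assms(1)] .
  then have "nbrs E (p ` {..m}) t \<subseteq> {p 0, p 1, p 2}"
    using nbrs_t_subset assms(2) by (auto simp: nbrs_def)
  moreover have "{p 0, p 1} \<subseteq> nbrs E (p ` {..m}) t"
    using assms(1) \<open>E t (p 1)\<close> path_length by (auto simp: nbrs_def)
  ultimately show ?thesis
    using path_length by (auto simp: nbrs_def)
qed

lemma image_path_reverse: "(\<lambda>j. p (m - j)) ` {..m} = p ` {..m}"
proof -
  have "x \<in> (\<lambda>j. m - j) ` {..m}" if "x \<le> m" for x
    using that by (intro image_eqI[where x = "m - x"]) auto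
  then have "(\<lambda>j. m - j) ` {..m} = {..m}"
    by auto
  then show ?thesis
    by (metis image_image)
qed

lemma closing_pair_reverse: "closing_pair V E (\<lambda>j. p (m - j)) m u w t"
  using graph claw_free induced_path_reverse[OF path] path_length in_vertices off_path
    nbrs_u nbrs_w t_ne_w adj_t_u not_adj_t_w
  by unfold_locales (simp_all add: image_path_reverse insert_commute)

theorem nbrs_t_cases:
  assumes "m \<noteq> 3"
  shows "nbrs E (p ` {..m}) t \<in>
    {{p 0, p 1}, {p 0, p 1, p 2}, {p (m - 1), p m}, {p (m - 2), p (m - 1), p m}}"
proof -
  interpret rev: closing_pair V E "\<lambda>j. p (m - j)" m u w t
    by (rule closing_pair_reverse)
  consider "E t (p 0)" "\<not> E t (p m)" | "\<not> E t (p 0)" "E t (p m)" | "E t (p 0)" "E t (p m)"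
    using adj_t_end by blast
  then show ?thesis
  proof cases
    case 1
    then show ?thesis using nbrs_t_start by blast
  next
    case 2
    then have "nbrs E (p ` {..m}) t \<in> {{p m, p (m - 1)}, {p m, p (m - 1), p (m - 2)}}"
      using rev.nbrs_t_start image_path_reverse by simp
    then show ?thesis by (auto simp: insert_commute)
  next
    case 3
    have "E t (p 1)" "E t (p (m - 1))"
      using adj_t_second rev.adj_t_second 3 by simp_all
    then have "p (m - 1) \<in> nbrs E (p ` {..m}) t"
      unfolding nbrs_def by auto
    then have "p (m - 1) \<in> {p 0, p 1, p 2, p m}"
      using nbrs_t_subset \<open>E t (p 1)\<close> by blast
    then have "m = 2"
      using assms path_length path_eq_iff[of "m - 1"] by auto
    then have "p ` {..m} = {p 0, p 1, p 2}"
      by (auto simp: atMost_Suc numeral_2_eq_2)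
    then show ?thesis
      using 3 \<open>E t (p 1)\<close> \<open>m = 2\<close> by (auto simp: nbrs_def)
  qed
qed

end

lemma closing_pair_hole_deformation:
  assumes "graph V E" "claw_free V E" "hole V E c n"
    and "s \<in> V" "s \<notin> c ` {..<n}" "nbrs E (c ` {..<n}) s = {c 0, c 1, c 2}"
    and "t \<in> V" "t \<notin> c ` {..<n}" "t \<noteq> s"
    and "{u, w} = {s, c 1}" "E t u" "\<not> E t w"
  shows "closing_pair V E (\<lambda>j. c ((j + 2) mod n)) (n - 2) u w t"
proof -
  let ?p = "\<lambda>j. c ((j + 2) mod n)"
  have n: "4 \<le> n" using hole_length[OF assms(3)] .
  then have "1 < n" by simp
  note delete = induced_path_hole_delete[OF assms(3) this, unfolded Suc_1]
  have "n - 2 + 2 = n" using n by simp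
  then have idx: "(0 + 2) mod n = 2" "(n - 2 + 2) mod n = 0"
    using n by (simp_all only: mod_self) simp
  then have ends: "?p 0 = c 2" "?p (n - 2) = c 0" "2 mod n = 2"
    by (simp_all only: idx add_0)
  have "c 0 \<noteq> c 1" "c 2 \<noteq> c 1"
    using n by (simp_all add: inj_on_eq_iff[OF hole_inj[OF assms(3)]])
  then have nbrs_s: "nbrs E (?p ` {..n - 2}) s = {?p 0, ?p (n - 2)}"
    using assms(6) unfolding delete(2) ends nbrs_def by auto
  have "c 1 \<in> V" "c 1 \<in> c ` {..<n}"
    using hole_in_vertices[OF assms(3), of 1] n by auto
  then have closers: "x \<in> V \<and> x \<notin> ?p ` {..n - 2} \<and> nbrs E (?p ` {..n - 2}) x = {?p 0, ?p (n - 2)}"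
    if "x \<in> {u, w}" for x
    using that assms(4,5,10) nbrs_s delete(2,3) ends by auto
  moreover have "t \<notin> {u, w}"
    using assms(8-10) \<open>c 1 \<in> c ` {..<n}\<close> by auto
  ultimately show ?thesis
    by unfold_locales (use assms(1,2,7,8,11,12) n delete(1,2) in auto)
qed

corollary nbrs_hole_deformation:
  assumes "graph V E" "claw_free V E" "hole V E c n" "n \<noteq> 5"
    and "s \<in> V" "s \<notin> c ` {..<n}" "nbrs E (c ` {..<n}) s = {c 0, c 1, c 2}"
    and "t \<in> V" "t \<notin> c ` {..<n}" "t \<noteq> s" "E t s \<noteq> E t (c 1)"
  shows "nbrs E (insert s (c ` {..<n})) t \<in>
    insert (if E t s then s else c 1) `
      {{c 2, c 3}, {c 2, c 3, c (4 mod n)}, {c (n - 1), c 0}, {c (n - 2), c (n - 1), c 0}}"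
proof -
  define u where "u = (if E t s then s else c 1)"
  define w where "w = (if E t s then c 1 else s)"
  let ?p = "\<lambda>j. c ((j + 2) mod n)"
  have n: "4 \<le> n" using hole_length[OF assms(3)] .
  then have P: "?p ` {..n - 2} = c ` {..<n} - {c 1}"
    by (intro induced_path_hole_delete(2)[OF assms(3), of 1, unfolded Suc_1]) simp
  have "n - 2 + 2 = n" using n by simp
  then have idx: "(0 + 2) mod n = 2" "(1 + 2) mod n = 3" "(2 + 2) mod n = 4 mod n"
    "(n - 2 + 2) mod n = 0" "(n - 2 - 1 + 2) mod n = n - 1" "(n - 2 - 2 + 2) mod n = n - 2"
    using n by (simp_all only: mod_self) simp_all
  have "closing_pair V E ?p (n - 2) u w t"
    using assms by (intro closing_pair_hole_deformation) (auto simp: u_def w_def)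
  moreover have "n - 2 \<noteq> 3" using assms(4) by simp
  ultimately have "nbrs E (?p ` {..n - 2}) t \<in>
      {{?p 0, ?p 1}, {?p 0, ?p 1, ?p 2}, {?p (n - 2 - 1), ?p (n - 2)},
       {?p (n - 2 - 2), ?p (n - 2 - 1), ?p (n - 2)}}"
    by (rule closing_pair.nbrs_t_cases)
  then have "nbrs E (c ` {..<n} - {c 1}) t \<in>
      {{c 2, c 3}, {c 2, c 3, c (4 mod n)}, {c (n - 1), c 0}, {c (n - 2), c (n - 1), c 0}}"
    unfolding P idx .
  moreover have "nbrs E (insert s (c ` {..<n})) t = insert u (nbrs E (c ` {..<n} - {c 1}) t)"
    using assms(11) n unfolding nbrs_def u_def by auto
  ultimately show ?thesis
    unfolding u_def[symmetric] by (simp only: imageI)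
qed

lemma interleave_even_mod:
  "0 < k \<Longrightarrow> interleave b a ((2 * i) mod (2 * k)) = b (i mod k)"
  by (simp add: interleave_def flip: mult_mod_right)

theorem lemma3:
  fixes V :: "'v set" and E :: "'v \<Rightarrow> 'v \<Rightarrow> bool"
    and a b :: "nat \<Rightarrow> 'v" and k :: nat and s t :: 'v
  defines "C \<equiv> interleave b a ` {..<2*k}"
  defines "u \<equiv> (if E t s then s else a 0)"
  assumes "graph V E"
    and "claw_free V E"
    and "hole V E (interleave b a) (2*k)"
    and "s \<in> V" and "s \<notin> C"
    and "nbrs E C s = {b 0, a 0, b 1}"
    and "t \<in> V" and "t \<notin> C" and "t \<noteq> s"
    and "E t s \<noteq> E t (a 0)"
  shows "nbrs E (insert s C) t \<in>
           { {a (k-1), b 0, u},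
             {b (k-1), a (k-1), b 0, u},
             {u, b 1, a 1},
             {u, b 1, a 1, b (2 mod k)} }"
proof -
  have k: "2 \<le> k" using hole_length[OF assms(5)] by simp
  have "2 * k - 1 = 2 * (k - 1) + 1" "2 * k - 2 = 2 * (k - 1)"
    using k by simp_all
  then have labels: "interleave b a 0 = b 0" "interleave b a 1 = a 0" "interleave b a 2 = b 1"
    "interleave b a 3 = a 1" "interleave b a (4 mod (2 * k)) = b (2 mod k)"
    "interleave b a (2 * k - 1) = a (k - 1)" "interleave b a (2 * k - 2) = b (k - 1)"
    using interleave_even_mod[of k b a 2] k by (simp_all add: interleave_def)
  have "2 * k \<noteq> 5" by presburger
  from nbrs_hole_deformation[of V E "interleave b a" "2 * k" s t, unfolded labels,
      OF assms(3-5) this assms(6-12)[unfolded C_def]]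
  show ?thesis
    unfolding C_def u_def by (elim imageE insertE emptyE) (simp_all add: insert_commute)
qed

end
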